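(* Let $d\ge1$, let $\Phi$ be a Young function and let $1<p_1<q_\Phi\le p_\Phi<p_2<\infty$. Then there exists a Young function $\Psi$ with $L^\Psi(\mathbb R^d)=L^\Phi(\mathbb R^d)$, $q_\Psi\le p_1$ and $p_\Psi\ge p_2$.
   Context: A Young function is a convex function $\Phi:[0,\infty)\to[0,\infty)$ with $\Phi(0)=0$, $\Phi(t)>0$ for $t>0$, and $\lim_{t\to\infty}\Phi(t)=\infty$. $\Phi'$ denotes the right derivative of $\Phi$. The Lebesgue exponents of $\Phi$ are $p_\Phi=\sup_{t>0}\frac{t\Phi'(t)}{\Phi(t)}$ and $q_\Phi=\inf_{t>0}\frac{t\Phi'(t)}{\Phi(t)}$. For a measurable $f$ on $\mathbb R^d$, $\rho_\Phi(f)=\int_{\mathbb R^d}\Phi(|f(x)|)\,dx$, the Luxemburg norm is $\|f\|_{L^\Phi}=\inf\{\lambda>0:\rho_\Phi(f/\lambda)\le1\}$, and the Orlicz space $L^\Phi(\mathbb R^d)$ consists of (classes of) measurable $f$ with $\|f\|_{L^\Phi}<\infty$. *)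

theory Defs
  imports "HOL-Analysis.Analysis"
begin

definition young_function :: "(real \<Rightarrow> real) \<Rightarrow> bool" where
  "young_function \<Phi> \<longleftrightarrow>
     convex_on {0..} \<Phi> \<and> \<Phi> 0 = 0 \<and> (\<forall>t>0. \<Phi> t > 0) \<and> filterlim \<Phi> at_top at_top"

definition right_deriv :: "(real \<Rightarrow> real) \<Rightarrow> real \<Rightarrow> real" where
  "right_deriv \<Phi> t = Lim (at_right 0) (\<lambda>h. (\<Phi> (t + h) - \<Phi> t) / h)"

definition upper_exponent :: "(real \<Rightarrow> real) \<Rightarrow> ereal" where
  "upper_exponent \<Phi> = (SUP t\<in>{0<..}. ereal (t * right_deriv \<Phi> t / \<Phi> t))"

definition lower_exponent :: "(real \<Rightarrow> real) \<Rightarrow> ereal" where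
  "lower_exponent \<Phi> = (INF t\<in>{0<..}. ereal (t * right_deriv \<Phi> t / \<Phi> t))"

text \<open>Modular, Luxemburg norm and Orlicz space on R^d (d = CARD('n)).\<close>
definition modular :: "(real \<Rightarrow> real) \<Rightarrow> (real ^ 'n \<Rightarrow> real) \<Rightarrow> ennreal" where
  "modular \<Phi> f = (\<integral>\<^sup>+ x. ennreal (\<Phi> \<bar>f x\<bar>) \<partial>lebesgue)"

definition luxemburg_norm :: "(real \<Rightarrow> real) \<Rightarrow> (real ^ 'n \<Rightarrow> real) \<Rightarrow> ereal" where
  "luxemburg_norm \<Phi> f = Inf {ereal l | l. l > 0 \<and> modular \<Phi> (\<lambda>x. f x / l) \<le> 1}"

definition orlicz_space :: "(real \<Rightarrow> real) \<Rightarrow> (real ^ 'n \<Rightarrow> real) set" where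
  "orlicz_space \<Phi> = {f. f \<in> borel_measurable lebesgue \<and> luxemburg_norm \<Phi> f < \<infinity>}"

end

theory Submission
  imports Defs
begin

text \<open>Put \<open>\<Psi> = max \<Phi> (a (t - 1)\<^sup>+)\<close>. Since a convex \<open>\<Phi>\<close> with \<open>\<Phi> 0 = 0\<close> grows at
  least linearly, \<open>\<Phi> \<le> \<Psi> \<le> C \<Phi>\<close>, so both functions define the same Orlicz space. For \<open>a\<close> large
  the ramp dominates \<open>\<Phi>\<close> on \<open>[t, t + 1]\<close>, where the index \<open>t \<Psi>'(t) / \<Psi>(t)\<close> is then
  \<open>t / (t - 1)\<close>; at the conjugate exponents \<open>t = p\<^sub>i / (p\<^sub>i - 1)\<close> this index equals \<open>p\<^sub>i\<close>.\<close>

lemma convex_on_max: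
  assumes "convex_on S f" "convex_on S g"
  shows "convex_on S (\<lambda>x. max (f x) (g x))"
  unfolding convex_on_def
proof (intro conjI ballI allI impI)
  show "convex S" using assms(1) by (rule convex_on_imp_convex)
  fix x y and u v :: real
  assume "x \<in> S" "y \<in> S" "0 \<le> u" "0 \<le> v" "u + v = 1"
  then have "f (u *\<^sub>R x + v *\<^sub>R y) \<le> u * max (f x) (g x) + v * max (f y) (g y)"
    and "g (u *\<^sub>R x + v *\<^sub>R y) \<le> u * max (f x) (g x) + v * max (f y) (g y)"
    using assms unfolding convex_on_def
    by (smt (verit, best) max.cobounded1 max.cobounded2 mult_left_mono)+
  then show "max (f (u *\<^sub>R x + v *\<^sub>R y)) (g (u *\<^sub>R x + v *\<^sub>R y))
      \<le> u * max (f x) (g x) + v * max (f y) (g y)"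
    by simp
qed

lemma convex_on_scale_le:
  fixes \<Phi> :: "real \<Rightarrow> real"
  assumes "convex_on {0..} \<Phi>" "\<Phi> 0 = 0" "0 \<le> s" "s \<le> 1" "0 \<le> y"
  shows "\<Phi> (s * y) \<le> s * \<Phi> y"
  using convex_onD[OF assms(1), of s 0 y] assms by auto

lemma convex_on_superlinear:
  fixes \<Phi> :: "real \<Rightarrow> real"
  assumes "convex_on {0..} \<Phi>" "\<Phi> 0 = 0" "1 \<le> z"
  shows "z * \<Phi> 1 \<le> \<Phi> z"
proof -
  have "\<Phi> ((1 / z) * z) \<le> (1 / z) * \<Phi> z"
    using assms by (intro convex_on_scale_le) auto
  then show ?thesis using assms(3) by (simp add: field_simps)
qed

lemma luxemburg_norm_finite_iff:
  "luxemburg_norm \<Phi> f < \<infinity> \<longleftrightarrow> (\<exists>l>0. modular \<Phi> (\<lambda>x. f x / l) \<le> 1)"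
proof
  assume "luxemburg_norm \<Phi> f < \<infinity>"
  then have "{ereal l | l. l > 0 \<and> modular \<Phi> (\<lambda>x. f x / l) \<le> 1} \<noteq> {}"
    unfolding luxemburg_norm_def by (metis Inf_empty less_irrefl top_ereal_def)
  then show "\<exists>l>0. modular \<Phi> (\<lambda>x. f x / l) \<le> 1" by auto
next
  assume "\<exists>l>0. modular \<Phi> (\<lambda>x. f x / l) \<le> 1"
  then obtain l where "l > 0" "modular \<Phi> (\<lambda>x. f x / l) \<le> 1" by blast
  then have "luxemburg_norm \<Phi> f \<le> ereal l"
    unfolding luxemburg_norm_def by (intro Inf_lower) auto
  then show "luxemburg_norm \<Phi> f < \<infinity>" by (rule le_less_trans) simp
qed

lemma orlicz_space_mono:
  assumes "C > 0" "\<And>y. 0 \<le> y \<Longrightarrow> \<Phi> (y / C) \<le> \<Psi> y"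
  shows "orlicz_space \<Psi> \<subseteq> orlicz_space \<Phi>"
proof
  fix f
  assume "f \<in> orlicz_space \<Psi>"
  then obtain l where f: "f \<in> borel_measurable lebesgue" and l: "l > 0" "modular \<Psi> (\<lambda>x. f x / l) \<le> 1"
    unfolding orlicz_space_def luxemburg_norm_finite_iff by blast
  have "modular \<Phi> (\<lambda>x. f x / (l * C)) \<le> modular \<Psi> (\<lambda>x. f x / l)"
    unfolding modular_def
  proof (intro nn_integral_mono ennreal_leI)
    fix x
    have "\<bar>f x / (l * C)\<bar> = \<bar>f x / l\<bar> / C" using l assms(1) by (simp add: abs_divide)
    then show "\<Phi> \<bar>f x / (l * C)\<bar> \<le> \<Psi> \<bar>f x / l\<bar>" by (metis abs_ge_zero assms(2))
  qed
  with l have "\<exists>l>0. modular \<Phi> (\<lambda>x. f x / l) \<le> 1"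
    using assms(1) by (intro exI[of _ "l * C"]) auto
  with f show "f \<in> orlicz_space \<Phi>"
    unfolding orlicz_space_def luxemburg_norm_finite_iff by blast
qed

lemma orlicz_space_eq_if_equivalent:
  fixes \<Phi> \<Psi> :: "real \<Rightarrow> real"
  assumes "convex_on {0..} \<Phi>" "\<Phi> 0 = 0" "C \<ge> 1"
    and lower: "\<And>y. 0 \<le> y \<Longrightarrow> \<Phi> y \<le> \<Psi> y" and upper: "\<And>y. 0 \<le> y \<Longrightarrow> \<Psi> y \<le> C * \<Phi> y"
  shows "orlicz_space \<Psi> = orlicz_space \<Phi>"
proof
  show "orlicz_space \<Psi> \<subseteq> orlicz_space \<Phi>"
    by (rule orlicz_space_mono[where C = 1]) (simp_all add: lower)
  have "\<Psi> (y / C) \<le> \<Phi> y" if "0 \<le> y" for y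
  proof -
    have "\<Psi> (y / C) \<le> C * \<Phi> ((1 / C) * y)" using upper[of "y / C"] that assms(3) by simp
    also have "\<dots> \<le> C * ((1 / C) * \<Phi> y)"
      using assms that by (intro mult_left_mono convex_on_scale_le) auto
    finally show ?thesis using assms(3) by simp
  qed
  then show "orlicz_space \<Phi> \<subseteq> orlicz_space \<Psi>"
    using assms(3) by (intro orlicz_space_mono[where C = C]) auto
qed

lemma right_deriv_eq_if_affine:
  assumes "\<delta> > 0" "\<And>h. 0 < h \<Longrightarrow> h \<le> \<delta> \<Longrightarrow> \<Psi> (t + h) = \<Psi> t + a * h"
  shows "right_deriv \<Psi> t = a"
proof -
  have "\<forall>\<^sub>F h in at_right 0. (\<Psi> (t + h) - \<Psi> t) / h = a"
    unfolding eventually_at_right_field using assms by (intro exI[of _ \<delta>]) auto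
  then have "((\<lambda>h. (\<Psi> (t + h) - \<Psi> t) / h) \<longlongrightarrow> a) (at_right 0)"
    by (rule tendsto_eventually)
  then show ?thesis
    unfolding right_deriv_def by (intro tendsto_Lim) (auto simp: trivial_limit_at_right_real)
qed

definition ramp_majorant :: "(real \<Rightarrow> real) \<Rightarrow> real \<Rightarrow> real \<Rightarrow> real" where
  "ramp_majorant \<Phi> a t = max (\<Phi> t) (a * max 0 (t - 1))"

lemma young_function_ramp_majorant:
  assumes "young_function \<Phi>" "a \<ge> 0"
  shows "young_function (ramp_majorant \<Phi> a)"
proof -
  have ramp: "convex_on {0..} (\<lambda>t. a * max 0 (t - 1))"
    using assms(2) by (intro convex_on_cmul convex_on_max convex_on_diff)
      (simp_all add: convex_on_const convex_on_ident concave_on_const)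
  have "filterlim (ramp_majorant \<Phi> a) at_top at_top"
    using assms(1) unfolding young_function_def ramp_majorant_def
    by (auto intro: filterlim_at_top_mono)
  with assms ramp show ?thesis
    unfolding young_function_def ramp_majorant_def
    by (auto intro!: convex_on_max simp: less_max_iff_disj)
qed

lemma ramp_majorant_le_const_mult:
  assumes "young_function \<Phi>" "a \<ge> 0" "z \<ge> 0"
  shows "ramp_majorant \<Phi> a z \<le> (1 + a / \<Phi> 1) * \<Phi> z"
proof -
  have cvx: "convex_on {0..} \<Phi>" and "\<Phi> 0 = 0" and \<Phi>1: "\<Phi> 1 > 0"
    and "\<Phi> z \<ge> 0"
    using assms unfolding young_function_def by (auto simp: le_less)
  have "a * max 0 (z - 1) \<le> a / \<Phi> 1 * \<Phi> z"
  proof (cases "z \<le> 1")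
    case False
    then have "z \<le> \<Phi> z / \<Phi> 1"
      using convex_on_superlinear[OF cvx \<open>\<Phi> 0 = 0\<close>, of z] \<Phi>1 by (simp add: field_simps)
    then have "a * max 0 (z - 1) \<le> a * (\<Phi> z / \<Phi> 1)"
      using False assms(2) by (intro mult_left_mono) auto
    then show ?thesis by simp
  qed (use assms \<open>\<Phi> z \<ge> 0\<close> \<Phi>1 in simp)
  then show ?thesis
    using \<open>\<Phi> z \<ge> 0\<close> \<Phi>1 assms(2) unfolding ramp_majorant_def by (simp add: algebra_simps)
qed

lemma orlicz_space_ramp_majorant:
  assumes "young_function \<Phi>" "a \<ge> 0"
  shows "orlicz_space (ramp_majorant \<Phi> a) = orlicz_space \<Phi>"
proof (rule orlicz_space_eq_if_equivalent)
  show "1 \<le> 1 + a / \<Phi> 1"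
    using assms unfolding young_function_def by (auto intro!: divide_nonneg_pos)
qed (use assms ramp_majorant_le_const_mult in \<open>auto simp: young_function_def ramp_majorant_def\<close>)

lemma ramp_majorant_index:
  fixes \<Phi> :: "real \<Rightarrow> real"
  assumes cvx: "convex_on {0..} \<Phi>" and "t > 1" and "a > 0"
    and dominated: "max (\<Phi> t) (\<Phi> (t + 1)) \<le> a * (t - 1)"
  shows "t * right_deriv (ramp_majorant \<Phi> a) t / ramp_majorant \<Phi> a t = t / (t - 1)"
proof -
  have ramp: "ramp_majorant \<Phi> a s = a * (s - 1)" if "t \<le> s" "s \<le> t + 1" for s
  proof -
    have "convex_on {t..t+1} \<Phi>" using cvx by (rule convex_on_subset) (use \<open>t > 1\<close> in auto)
    then have "\<Phi> s \<le> max (\<Phi> t) (\<Phi> (t + 1))" using convex_on_le_max that by fastforce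
    also have "\<dots> \<le> a * (s - 1)"
      using dominated \<open>a > 0\<close> that by (smt (verit) mult_left_mono)
    finally show ?thesis using that \<open>t > 1\<close> unfolding ramp_majorant_def by auto
  qed
  have "right_deriv (ramp_majorant \<Phi> a) t = a"
    by (rule right_deriv_eq_if_affine[where \<delta> = 1]) (simp_all add: ramp algebra_simps)
  with ramp[of t] \<open>a > 0\<close> show ?thesis by simp
qed

lemma eventually_ramp_majorant_index:
  fixes \<Phi> :: "real \<Rightarrow> real"
  assumes "convex_on {0..} \<Phi>" "t > 1"
  shows "\<forall>\<^sub>F a in at_top. t * right_deriv (ramp_majorant \<Phi> a) t / ramp_majorant \<Phi> a t = t / (t - 1)"
  using eventually_gt_at_top[of "max 0 (max (\<Phi> t) (\<Phi> (t + 1)) / (t - 1))"]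
proof eventually_elim
  case (elim a)
  with assms show ?case
    by (intro ramp_majorant_index) (simp_all add: pos_divide_less_eq)
qed

lemma conjugate_exponent:
  fixes p :: real
  assumes "p > 1"
  shows "p / (p - 1) > 1" "(p / (p - 1)) / (p / (p - 1) - 1) = p"
  using assms by (simp_all add: field_simps)

theorem mainTheorem8:
  fixes \<Phi> :: "real \<Rightarrow> real" and p1 p2 :: real
  assumes "young_function \<Phi>"
    and "1 < p1" and "ereal p1 < lower_exponent \<Phi>"
    and "lower_exponent \<Phi> \<le> upper_exponent \<Phi>"
    and "upper_exponent \<Phi> < ereal p2"
  shows "\<exists>\<Psi>. young_function \<Psi> \<and>
           (orlicz_space \<Psi> :: (real ^ 'n \<Rightarrow> real) set) = orlicz_space \<Phi> \<and>
           lower_exponent \<Psi> \<le> ereal p1 \<and> upper_exponent \<Psi> \<ge> ereal p2"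
proof -
  have cvx: "convex_on {0..} \<Phi>" using assms(1) by (simp add: young_function_def)
  have "ereal p1 < ereal p2" using assms(3-5) by order
  then have "1 < p2" using \<open>1 < p1\<close> by simp
  define t1 t2 where "t1 = p1 / (p1 - 1)" and "t2 = p2 / (p2 - 1)"
  have t: "t1 > 1" "t1 / (t1 - 1) = p1" "t2 > 1" "t2 / (t2 - 1) = p2"
    using conjugate_exponent \<open>1 < p1\<close> \<open>1 < p2\<close> unfolding t1_def t2_def by blast+
  let ?index = "\<lambda>a t. t * right_deriv (ramp_majorant \<Phi> a) t / ramp_majorant \<Phi> a t"
  have "\<forall>\<^sub>F a in at_top. a \<ge> 0 \<and> ?index a t1 = p1 \<and> ?index a t2 = p2"
    using eventually_ge_at_top[of 0] eventually_ramp_majorant_index[OF cvx t(1)]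
      eventually_ramp_majorant_index[OF cvx t(3)]
    unfolding t(2,4) by eventually_elim simp
  then obtain a where "a \<ge> 0" and index: "?index a t1 = p1" "?index a t2 = p2"
    using eventually_happens'[OF trivial_limit_at_top_linorder] by blast
  have "lower_exponent (ramp_majorant \<Phi> a) \<le> ereal (?index a t1)"
    unfolding lower_exponent_def by (rule INF_lower) (use t(1) in simp)
  moreover have "upper_exponent (ramp_majorant \<Phi> a) \<ge> ereal (?index a t2)"
    unfolding upper_exponent_def by (rule SUP_upper) (use t(3) in simp)
  ultimately show ?thesis
    unfolding index
    using young_function_ramp_majorant orlicz_space_ramp_majorant assms(1) \<open>a \<ge> 0\<close> by blast
qed

end
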